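(* Every cartesian category $(\mathcal C,\times,1)$, viewed as a discard category with $\top_A:A\to 1$ the unique morphism to the terminal object, is pseudo-purifiable. Moreover, for every $f\in\mathcal C(A,B)$ the pairing $\langle f,\mathrm{id}_A\rangle\in\mathcal C(A,B\times A)$ is a pseudo-purification of $f$.
   Context: A discard category is a symmetric monoidal category with, for each object $A$, a morphism $\top_A:A\to I$ with $\top_I=\mathrm{id}_I$ and $\top_{A\otimes B}=\top_A\otimes\top_B$; $f:A\to B$ is causal if $\top_B\circ f=\top_A$. A morphism $p\in\mathcal C(A,B\otimes X)$ is a pseudo-purification of $f\in\mathcal C(A,B)$, written $p\in\mathrm{Pure}(f)$, if for every object $Y$ and every $g\in\mathcal C(A,B\otimes Y)$ with $f=(\mathrm{id}_B\otimes\top_Y)\circ g$ there is a causal $c\in\mathcal C(X,Y)$ with $g=(\mathrm{id}_B\otimes c)\circ p$. The category is pseudo-purifiable if every morphism has a pseudo-purification and, for all $f_1\in\mathcal C(A_1,B_1\otimes C)$, $f_2\in\mathcal C(C\otimes A_2,B_2)$, $p_1\in\mathrm{Pure}(f_1)$ with $p_1:A_1\to B_1\otimes C\otimes X_1$ and $p_2\in\mathrm{Pure}(f_2)$ with $p_2:C\otimes A_2\to B_2\otimes X_2$, the morphism $(\mathrm{id}_{B_1\otimes B_2}\otimes\sigma_{X_2,X_1})\circ(\mathrm{id}_{B_1}\otimes p_2\otimes\mathrm{id}_{X_1})\circ(\mathrm{id}_{B_1\otimes C}\otimes\sigma_{X_1,A_2})\circ(p_1\otimes\mathrm{id}_{A_2})$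 is a pseudo-purification of $(\mathrm{id}_{B_1}\otimes f_2)\circ(f_1\otimes\mathrm{id}_{A_2})$ (here $\sigma$ is the symmetry). *)

theory Defs
  imports Main
begin

record ('o, 'm) cart_cat =
  cat_ob   :: "'o set"
  cat_hom  :: "'o \<Rightarrow> 'o \<Rightarrow> 'm set"
  cat_comp :: "'m \<Rightarrow> 'm \<Rightarrow> 'm"   (* cat_comp g f = g \<circ> f *)
  cat_id   :: "'o \<Rightarrow> 'm"
  cat_prod :: "'o \<Rightarrow> 'o \<Rightarrow> 'o"
  cat_p1   :: "'o \<Rightarrow> 'o \<Rightarrow> 'm"
  cat_p2   :: "'o \<Rightarrow> 'o \<Rightarrow> 'm"
  cat_pair :: "'m \<Rightarrow> 'm \<Rightarrow> 'm"
  cat_one  :: "'o"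
  cat_bang :: "'o \<Rightarrow> 'm"

definition cartesian_category :: "('o, 'm, 'x) cart_cat_scheme \<Rightarrow> bool" where
  "cartesian_category K \<longleftrightarrow>
     (\<forall>A B. cat_hom K A B \<noteq> {} \<longrightarrow> A \<in> cat_ob K \<and> B \<in> cat_ob K) \<and>
     (\<forall>A B A' B' f. f \<in> cat_hom K A B \<and> f \<in> cat_hom K A' B' \<longrightarrow> A = A' \<and> B = B') \<and>
     (\<forall>A\<in>cat_ob K. cat_id K A \<in> cat_hom K A A) \<and>
     (\<forall>A B D f g. f \<in> cat_hom K A B \<and> g \<in> cat_hom K B D \<longrightarrow> cat_comp K g f \<in> cat_hom K A D) \<and>
     (\<forall>A B f. f \<in> cat_hom K A B \<longrightarrow> cat_comp K (cat_id K B) f = f \<and> cat_comp K f (cat_id K A) = f) \<and>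
     (\<forall>A B D E f g h. f \<in> cat_hom K A B \<and> g \<in> cat_hom K B D \<and> h \<in> cat_hom K D E \<longrightarrow>
        cat_comp K h (cat_comp K g f) = cat_comp K (cat_comp K h g) f) \<and>
     cat_one K \<in> cat_ob K \<and>
     (\<forall>A\<in>cat_ob K. cat_bang K A \<in> cat_hom K A (cat_one K)) \<and>
     (\<forall>A f. f \<in> cat_hom K A (cat_one K) \<longrightarrow> f = cat_bang K A) \<and>
     (\<forall>A\<in>cat_ob K. \<forall>B\<in>cat_ob K.
        cat_prod K A B \<in> cat_ob K \<and>
        cat_p1 K A B \<in> cat_hom K (cat_prod K A B) A \<and>
        cat_p2 K A B \<in> cat_hom K (cat_prod K A B) B \<and>
        (\<forall>D f g. f \<in> cat_hom K D A \<and> g \<in> cat_hom K D B \<longrightarrow>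
           cat_pair K f g \<in> cat_hom K D (cat_prod K A B) \<and>
           cat_comp K (cat_p1 K A B) (cat_pair K f g) = f \<and>
           cat_comp K (cat_p2 K A B) (cat_pair K f g) = g \<and>
           (\<forall>h. h \<in> cat_hom K D (cat_prod K A B) \<and>
                cat_comp K (cat_p1 K A B) h = f \<and> cat_comp K (cat_p2 K A B) h = g \<longrightarrow>
                h = cat_pair K f g)))"

definition tens :: "('o, 'm, 'x) cart_cat_scheme \<Rightarrow> 'o \<Rightarrow> 'o \<Rightarrow> 'm \<Rightarrow> 'm \<Rightarrow> 'm" where
  "tens K A B f g = cat_pair K (cat_comp K f (cat_p1 K A B)) (cat_comp K g (cat_p2 K A B))"

definition symm :: "('o, 'm, 'x) cart_cat_scheme \<Rightarrow> 'o \<Rightarrow> 'o \<Rightarrow> 'm" where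
  "symm K A B = cat_pair K (cat_p2 K A B) (cat_p1 K A B)"

definition assoc :: "('o, 'm, 'x) cart_cat_scheme \<Rightarrow> 'o \<Rightarrow> 'o \<Rightarrow> 'o \<Rightarrow> 'm" where
  "assoc K A B D =
     cat_pair K (cat_comp K (cat_p1 K A B) (cat_p1 K (cat_prod K A B) D))
       (cat_pair K (cat_comp K (cat_p2 K A B) (cat_p1 K (cat_prod K A B) D))
                   (cat_p2 K (cat_prod K A B) D))"

definition assoc_inv :: "('o, 'm, 'x) cart_cat_scheme \<Rightarrow> 'o \<Rightarrow> 'o \<Rightarrow> 'o \<Rightarrow> 'm" where
  "assoc_inv K A B D =
     cat_pair K
       (cat_pair K (cat_p1 K A (cat_prod K B D))
                   (cat_comp K (cat_p1 K B D) (cat_p2 K A (cat_prod K B D))))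
       (cat_comp K (cat_p2 K B D) (cat_p2 K A (cat_prod K B D)))"

definition runit :: "('o, 'm, 'x) cart_cat_scheme \<Rightarrow> 'o \<Rightarrow> 'm" where
  "runit K A = cat_p1 K A (cat_one K)"

definition discard :: "('o, 'm, 'x) cart_cat_scheme \<Rightarrow> 'o \<Rightarrow> 'm" where
  "discard K A = cat_bang K A"

definition causal :: "('o, 'm, 'x) cart_cat_scheme \<Rightarrow> 'o \<Rightarrow> 'o \<Rightarrow> 'm \<Rightarrow> bool" where
  "causal K X Y c \<longleftrightarrow> c \<in> cat_hom K X Y \<and> cat_comp K (discard K Y) c = discard K X"

text \<open>p : A \<rightarrow> B \<otimes> X is a pseudo-purification of f : A \<rightarrow> B.
  (Here (id_B \<otimes> \<top>_Y) \<circ> g lands in B \<otimes> 1, identified with B via the right unitor.)\<close>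
definition is_pure :: "('o, 'm, 'x) cart_cat_scheme \<Rightarrow> 'o \<Rightarrow> 'o \<Rightarrow> 'm \<Rightarrow> 'o \<Rightarrow> 'm \<Rightarrow> bool" where
  "is_pure K A B f X p \<longleftrightarrow>
     X \<in> cat_ob K \<and> p \<in> cat_hom K A (cat_prod K B X) \<and>
     (\<forall>Y\<in>cat_ob K. \<forall>g\<in>cat_hom K A (cat_prod K B Y).
        f = cat_comp K (runit K B) (cat_comp K (tens K B Y (cat_id K B) (discard K Y)) g) \<longrightarrow>
        (\<exists>c. causal K X Y c \<and> g = cat_comp K (tens K B X (cat_id K B) c) p))"

definition seq_comp :: "('o, 'm, 'x) cart_cat_scheme \<Rightarrow> 'o \<Rightarrow> 'o \<Rightarrow> 'o \<Rightarrow> 'o \<Rightarrow> 'm \<Rightarrow> 'm \<Rightarrow> 'm" where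
  "seq_comp K A1 B1 C A2 f1 f2 =
     cat_comp K (tens K B1 (cat_prod K C A2) (cat_id K B1) f2)
       (cat_comp K (assoc K B1 C A2) (tens K A1 A2 f1 (cat_id K A2)))"

text \<open>The corresponding composite of purifications p1 : A1 \<rightarrow> (B1 \<otimes> C) \<otimes> X1 and
  p2 : C \<otimes> A2 \<rightarrow> B2 \<otimes> X2, landing in (B1 \<otimes> B2) \<otimes> (X1 \<otimes> X2), with associators explicit.\<close>
definition seq_comp_pure ::
  "('o, 'm, 'x) cart_cat_scheme \<Rightarrow> 'o \<Rightarrow> 'o \<Rightarrow> 'o \<Rightarrow> 'o \<Rightarrow> 'o \<Rightarrow> 'o \<Rightarrow> 'o \<Rightarrow> 'm \<Rightarrow> 'm \<Rightarrow> 'm" where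
  "seq_comp_pure K A1 B1 C A2 B2 X1 X2 p1 p2 =
     (let P = cat_prod K; c = cat_comp K; i = cat_id K; BC = P B1 C;
          s1 = tens K A1 A2 p1 (i A2);
          s2 = assoc K BC X1 A2;
          s3 = tens K BC (P X1 A2) (i BC) (symm K X1 A2);
          s4 = assoc_inv K BC A2 X1;
          s5 = tens K (P BC A2) X1 (assoc K B1 C A2) (i X1);
          s6 = tens K (P B1 (P C A2)) X1 (tens K B1 (P C A2) (i B1) p2) (i X1);
          s7 = tens K (P B1 (P B2 X2)) X1 (assoc_inv K B1 B2 X2) (i X1);
          s8 = assoc K (P B1 B2) X2 X1;
          s9 = tens K (P B1 B2) (P X2 X1) (i (P B1 B2)) (symm K X2 X1)
      in c s9 (c s8 (c s7 (c s6 (c s5 (c s4 (c s3 (c s2 s1))))))))"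

definition pseudo_purifiable :: "('o, 'm, 'x) cart_cat_scheme \<Rightarrow> bool" where
  "pseudo_purifiable K \<longleftrightarrow>
     (\<forall>A\<in>cat_ob K. \<forall>B\<in>cat_ob K. \<forall>f\<in>cat_hom K A B. \<exists>X p. is_pure K A B f X p) \<and>
     (\<forall>A1 B1 C A2 B2 X1 X2 f1 f2 p1 p2.
        A1 \<in> cat_ob K \<and> B1 \<in> cat_ob K \<and> C \<in> cat_ob K \<and> A2 \<in> cat_ob K \<and> B2 \<in> cat_ob K \<and>
        f1 \<in> cat_hom K A1 (cat_prod K B1 C) \<and> f2 \<in> cat_hom K (cat_prod K C A2) B2 \<and>
        is_pure K A1 (cat_prod K B1 C) f1 X1 p1 \<and> is_pure K (cat_prod K C A2) B2 f2 X2 p2 \<longrightarrow>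
        is_pure K (cat_prod K A1 A2) (cat_prod K B1 B2) (seq_comp K A1 B1 C A2 f1 f2)
          (cat_prod K X1 X2) (seq_comp_pure K A1 B1 C A2 B2 X1 X2 p1 p2))"

end

theory Submission
  imports Defs
begin

text \<open>In a cartesian category, \<open>p : A \<rightarrow> B \<times> X\<close> is a pseudo-purification of \<open>f\<close> exactly
  when \<open>\<pi>\<^sub>1 p = f\<close> and \<open>\<pi>\<^sub>2 p\<close> has a retraction \<open>r\<close>: for \<open>g\<close> with \<open>\<pi>\<^sub>1 g = f\<close> the map
  \<open>c = \<pi>\<^sub>2 g r\<close> satisfies \<open>(id \<times> c) p = g\<close>, causality being automatic since \<open>1\<close> is terminal;
  conversely, purifying the graph \<open>\<langle>f, id\<rangle>\<close> itself produces a retraction. The graph has the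
  retraction \<open>id\<close>. In the composite of two purifications the second component is
  \<open>\<langle>\<pi>\<^sub>2 p\<^sub>1 \<pi>\<^sub>1, \<pi>\<^sub>2 p\<^sub>2 \<langle>\<pi>\<^sub>2 \<pi>\<^sub>1 p\<^sub>1 \<pi>\<^sub>1, \<pi>\<^sub>2\<rangle>\<rangle>\<close>, and \<open>\<langle>r\<^sub>1 \<pi>\<^sub>1, \<pi>\<^sub>2 r\<^sub>2 \<pi>\<^sub>2\<rangle>\<close> retracts it.\<close>

locale cartesian =
  fixes K :: "('o, 'm, 'x) cart_cat_scheme"
  assumes hom_obs: "f \<in> cat_hom K A B \<Longrightarrow> A \<in> cat_ob K \<and> B \<in> cat_ob K"
    and hom_unique: "f \<in> cat_hom K A B \<Longrightarrow> f \<in> cat_hom K A' B' \<Longrightarrow> A = A' \<and> B = B'"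
    and id_in_hom: "A \<in> cat_ob K \<Longrightarrow> cat_id K A \<in> cat_hom K A A"
    and comp_in_hom: "f \<in> cat_hom K A B \<Longrightarrow> g \<in> cat_hom K B D \<Longrightarrow> cat_comp K g f \<in> cat_hom K A D"
    and id_comp_hom: "f \<in> cat_hom K A B \<Longrightarrow> cat_comp K (cat_id K B) f = f"
    and comp_id_hom: "f \<in> cat_hom K A B \<Longrightarrow> cat_comp K f (cat_id K A) = f"
    and comp_assoc_hom: "f \<in> cat_hom K A B \<Longrightarrow> g \<in> cat_hom K B D \<Longrightarrow> h \<in> cat_hom K D E \<Longrightarrow>
      cat_comp K (cat_comp K h g) f = cat_comp K h (cat_comp K g f)"
    and one_ob: "cat_one K \<in> cat_ob K"
    and bang_in_hom: "A \<in> cat_ob K \<Longrightarrow> cat_bang K A \<in> cat_hom K A (cat_one K)"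
    and bang_unique: "f \<in> cat_hom K A (cat_one K) \<Longrightarrow> f = cat_bang K A"
    and prod_ob: "A \<in> cat_ob K \<Longrightarrow> B \<in> cat_ob K \<Longrightarrow> cat_prod K A B \<in> cat_ob K"
    and p1_in_hom: "A \<in> cat_ob K \<Longrightarrow> B \<in> cat_ob K \<Longrightarrow> cat_p1 K A B \<in> cat_hom K (cat_prod K A B) A"
    and p2_in_hom: "A \<in> cat_ob K \<Longrightarrow> B \<in> cat_ob K \<Longrightarrow> cat_p2 K A B \<in> cat_hom K (cat_prod K A B) B"
    and pair_in_hom: "A \<in> cat_ob K \<Longrightarrow> B \<in> cat_ob K \<Longrightarrow> f \<in> cat_hom K D A \<Longrightarrow> g \<in> cat_hom K D B \<Longrightarrow>
      cat_pair K f g \<in> cat_hom K D (cat_prod K A B)"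
    and p1_pair_hom: "A \<in> cat_ob K \<Longrightarrow> B \<in> cat_ob K \<Longrightarrow> f \<in> cat_hom K D A \<Longrightarrow> g \<in> cat_hom K D B \<Longrightarrow>
      cat_comp K (cat_p1 K A B) (cat_pair K f g) = f"
    and p2_pair_hom: "A \<in> cat_ob K \<Longrightarrow> B \<in> cat_ob K \<Longrightarrow> f \<in> cat_hom K D A \<Longrightarrow> g \<in> cat_hom K D B \<Longrightarrow>
      cat_comp K (cat_p2 K A B) (cat_pair K f g) = g"
    and pair_unique: "A \<in> cat_ob K \<Longrightarrow> B \<in> cat_ob K \<Longrightarrow> f \<in> cat_hom K D A \<Longrightarrow> g \<in> cat_hom K D B \<Longrightarrow>
      h \<in> cat_hom K D (cat_prod K A B) \<Longrightarrow> cat_comp K (cat_p1 K A B) h = f \<Longrightarrow>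
      cat_comp K (cat_p2 K A B) h = g \<Longrightarrow> h = cat_pair K f g"

lemma cartesian_categoryD: "cartesian_category K \<Longrightarrow> cartesian K"
  unfolding cartesian_category_def by (elim conjE, unfold_locales) metis+

context cartesian
begin

abbreviation circ :: "'m \<Rightarrow> 'm \<Rightarrow> 'm"  (infixr "\<cdot>" 55)
  where "g \<cdot> f \<equiv> cat_comp K g f"

text \<open>Hom-sets are disjoint, so every arrow has a unique domain and codomain; these let the
  simplifier discharge the typing side conditions.\<close>

definition arr :: "'m \<Rightarrow> bool"
  where "arr f \<longleftrightarrow> (\<exists>A B. f \<in> cat_hom K A B)"

definition dom :: "'m \<Rightarrow> 'o"
  where "dom f = (THE A. \<exists>B. f \<in> cat_hom K A B)"

definition cod :: "'m \<Rightarrow> 'o"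
  where "cod f = (THE B. \<exists>A. f \<in> cat_hom K A B)"

lemma in_homD:
  assumes "f \<in> cat_hom K A B"
  shows "arr f" and "dom f = A" and "cod f = B"
proof -
  show "arr f" using assms unfolding arr_def by blast
  show "dom f = A" unfolding dom_def using assms hom_unique by blast
  show "cod f = B" unfolding cod_def using assms hom_unique by blast
qed

lemma arr_in_hom: "arr f \<Longrightarrow> f \<in> cat_hom K (dom f) (cod f)"
  unfolding arr_def using in_homD by metis

lemma in_homI: "arr f \<Longrightarrow> dom f = A \<Longrightarrow> cod f = B \<Longrightarrow> f \<in> cat_hom K A B"
  using arr_in_hom by blast

lemma ob_dom: "arr f \<Longrightarrow> dom f \<in> cat_ob K"
  and ob_cod: "arr f \<Longrightarrow> cod f \<in> cat_ob K"
  using arr_in_hom hom_obs by blast+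

lemma arr_id: "A \<in> cat_ob K \<Longrightarrow> arr (cat_id K A)"
  and dom_id: "A \<in> cat_ob K \<Longrightarrow> dom (cat_id K A) = A"
  and cod_id: "A \<in> cat_ob K \<Longrightarrow> cod (cat_id K A) = A"
  using in_homD id_in_hom by blast+

lemma arr_comp: "arr f \<Longrightarrow> arr g \<Longrightarrow> dom g = cod f \<Longrightarrow> arr (g \<cdot> f)"
  and dom_comp: "arr f \<Longrightarrow> arr g \<Longrightarrow> dom g = cod f \<Longrightarrow> dom (g \<cdot> f) = dom f"
  and cod_comp: "arr f \<Longrightarrow> arr g \<Longrightarrow> dom g = cod f \<Longrightarrow> cod (g \<cdot> f) = cod g"
  using in_homD arr_in_hom comp_in_hom by metis+

lemma arr_p1: "A \<in> cat_ob K \<Longrightarrow> B \<in> cat_ob K \<Longrightarrow> arr (cat_p1 K A B)"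
  and dom_p1: "A \<in> cat_ob K \<Longrightarrow> B \<in> cat_ob K \<Longrightarrow> dom (cat_p1 K A B) = cat_prod K A B"
  and cod_p1: "A \<in> cat_ob K \<Longrightarrow> B \<in> cat_ob K \<Longrightarrow> cod (cat_p1 K A B) = A"
  and arr_p2: "A \<in> cat_ob K \<Longrightarrow> B \<in> cat_ob K \<Longrightarrow> arr (cat_p2 K A B)"
  and dom_p2: "A \<in> cat_ob K \<Longrightarrow> B \<in> cat_ob K \<Longrightarrow> dom (cat_p2 K A B) = cat_prod K A B"
  and cod_p2: "A \<in> cat_ob K \<Longrightarrow> B \<in> cat_ob K \<Longrightarrow> cod (cat_p2 K A B) = B"
  using in_homD p1_in_hom p2_in_hom by blast+

lemma pair_in_hom_arr:
  "arr f \<Longrightarrow> arr g \<Longrightarrow> dom f = dom g \<Longrightarrow> cat_pair K f g \<in> cat_hom K (dom f) (cat_prod K (cod f) (cod g))"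
  using pair_in_hom arr_in_hom ob_cod by metis

lemma arr_pair: "arr f \<Longrightarrow> arr g \<Longrightarrow> dom f = dom g \<Longrightarrow> arr (cat_pair K f g)"
  and dom_pair: "arr f \<Longrightarrow> arr g \<Longrightarrow> dom f = dom g \<Longrightarrow> dom (cat_pair K f g) = dom f"
  and cod_pair: "arr f \<Longrightarrow> arr g \<Longrightarrow> dom f = dom g \<Longrightarrow>
    cod (cat_pair K f g) = cat_prod K (cod f) (cod g)"
  using pair_in_hom_arr in_homD by blast+

lemma arr_bang: "A \<in> cat_ob K \<Longrightarrow> arr (cat_bang K A)"
  and dom_bang: "A \<in> cat_ob K \<Longrightarrow> dom (cat_bang K A) = A"
  and cod_bang: "A \<in> cat_ob K \<Longrightarrow> cod (cat_bang K A) = cat_one K"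
  using in_homD bang_in_hom by blast+

lemma cat_comp_assoc: "arr f \<Longrightarrow> arr g \<Longrightarrow> arr h \<Longrightarrow> dom g = cod f \<Longrightarrow> dom h = cod g \<Longrightarrow>
    (h \<cdot> g) \<cdot> f = h \<cdot> g \<cdot> f"
  using comp_assoc_hom arr_in_hom by metis

lemma cat_id_comp: "arr f \<Longrightarrow> cod f = B \<Longrightarrow> cat_id K B \<cdot> f = f"
  and cat_comp_id: "arr f \<Longrightarrow> dom f = A \<Longrightarrow> f \<cdot> cat_id K A = f"
  using id_comp_hom comp_id_hom arr_in_hom by metis+

lemma p1_pair: "arr f \<Longrightarrow> arr g \<Longrightarrow> dom f = dom g \<Longrightarrow> cod f = A \<Longrightarrow> cod g = B \<Longrightarrow>
    cat_p1 K A B \<cdot> cat_pair K f g = f"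
  and p2_pair: "arr f \<Longrightarrow> arr g \<Longrightarrow> dom f = dom g \<Longrightarrow> cod f = A \<Longrightarrow> cod g = B \<Longrightarrow>
    cat_p2 K A B \<cdot> cat_pair K f g = g"
  using p1_pair_hom p2_pair_hom arr_in_hom ob_cod by metis+

lemma pair_p1_p2:
  assumes "arr h" "cod h = cat_prod K A B" "A \<in> cat_ob K" "B \<in> cat_ob K"
  shows "cat_pair K (cat_p1 K A B \<cdot> h) (cat_p2 K A B \<cdot> h) = h"
proof -
  have "h \<in> cat_hom K (dom h) (cat_prod K A B)"
    using assms arr_in_hom by metis
  then show ?thesis
    using assms pair_unique p1_in_hom p2_in_hom comp_in_hom by metis
qed

lemma pair_comp:
  assumes "arr f" "arr g" "arr h" "dom f = dom g" "cod h = dom f"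
  shows "cat_pair K f g \<cdot> h = cat_pair K (f \<cdot> h) (g \<cdot> h)"
proof (rule pair_unique)
  have obs: "cod f \<in> cat_ob K" "cod g \<in> cat_ob K"
    using assms ob_cod by blast+
  have fg: "cat_pair K f g \<in> cat_hom K (dom f) (cat_prod K (cod f) (cod g))"
    using assms pair_in_hom_arr by blast
  have h: "h \<in> cat_hom K (dom h) (dom f)"
    using assms arr_in_hom by metis
  show "cat_pair K f g \<cdot> h \<in> cat_hom K (dom h) (cat_prod K (cod f) (cod g))"
    using fg h comp_in_hom by blast
  show "f \<cdot> h \<in> cat_hom K (dom h) (cod f)" "g \<cdot> h \<in> cat_hom K (dom h) (cod g)"
    using assms h arr_in_hom comp_in_hom by metis+
  show "cat_p1 K (cod f) (cod g) \<cdot> cat_pair K f g \<cdot> h = f \<cdot> h"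
    using comp_assoc_hom[OF h fg p1_in_hom[OF obs]] assms by (simp add: p1_pair)
  show "cat_p2 K (cod f) (cod g) \<cdot> cat_pair K f g \<cdot> h = g \<cdot> h"
    using comp_assoc_hom[OF h fg p2_in_hom[OF obs]] assms by (simp add: p2_pair)
qed (use assms ob_cod in blast)+

lemma pair_proj: "A \<in> cat_ob K \<Longrightarrow> B \<in> cat_ob K \<Longrightarrow>
    cat_pair K (cat_p1 K A B) (cat_p2 K A B) = cat_id K (cat_prod K A B)"
  using pair_p1_p2[of "cat_id K (cat_prod K A B)" A B]
  by (simp add: prod_ob arr_id cod_id dom_p1 dom_p2 arr_p1 arr_p2 cat_comp_id)

lemma bang_comp: "arr f \<Longrightarrow> cod f = A \<Longrightarrow> cat_bang K A \<cdot> f = cat_bang K (dom f)"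
  by (metis arr_in_hom ob_cod bang_in_hom bang_unique comp_in_hom)

lemmas cat_simps = prod_ob one_ob ob_dom ob_cod arr_id dom_id cod_id arr_comp dom_comp cod_comp
  arr_p1 dom_p1 cod_p1 arr_p2 dom_p2 cod_p2 arr_pair dom_pair cod_pair arr_bang dom_bang cod_bang
  cat_comp_assoc cat_id_comp cat_comp_id p1_pair p2_pair pair_comp pair_p1_p2 pair_proj bang_comp

lemma pair_inject:
  assumes "cat_pair K f g = cat_pair K f' g'"
    and "arr f" "arr g" "dom f = dom g" "arr f'" "arr g'" "dom f' = dom g'"
    and "cod f = cod f'" "cod g = cod g'"
  shows "f = f' \<and> g = g'"
proof
  have "f = cat_p1 K (cod f) (cod g) \<cdot> cat_pair K f g"
    using assms(2-4) by (simp add: p1_pair)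
  then show "f = f'"
    using assms by (simp add: p1_pair)
  have "g = cat_p2 K (cod f) (cod g) \<cdot> cat_pair K f g"
    using assms(2-4) by (simp add: p2_pair)
  then show "g = g'"
    using assms by (simp add: p2_pair)
qed

lemma causal_iff_in_hom: "causal K X Y c \<longleftrightarrow> c \<in> cat_hom K X Y"
  unfolding causal_def discard_def using bang_unique comp_in_hom bang_in_hom hom_obs by blast

lemma comp_tens:
  assumes "arr f" "arr g" "arr h" "cod h = cat_prod K A B" "dom f = A" "dom g = B"
  shows "tens K A B f g \<cdot> h = cat_pair K (f \<cdot> cat_p1 K A B \<cdot> h) (g \<cdot> cat_p2 K A B \<cdot> h)"
proof -
  have "A \<in> cat_ob K" "B \<in> cat_ob K"
    using assms ob_dom by blast+
  then show ?thesis
    using assms unfolding tens_def by (simp add: cat_simps)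
qed

lemma marginal_eq_p1:
  assumes "g \<in> cat_hom K A (cat_prod K B Y)" "B \<in> cat_ob K" "Y \<in> cat_ob K"
  shows "runit K B \<cdot> tens K B Y (cat_id K B) (discard K Y) \<cdot> g = cat_p1 K B Y \<cdot> g"
  using assms in_homD[OF assms(1)] hom_obs[OF assms(1)] unfolding runit_def discard_def
  by (simp add: comp_tens cat_simps)

lemma is_pureD:
  assumes pure: "is_pure K A B f X p" and f: "f \<in> cat_hom K A B"
  obtains r where "X \<in> cat_ob K" "p \<in> cat_hom K A (cat_prod K B X)" "cat_p1 K B X \<cdot> p = f"
    "r \<in> cat_hom K X A" "r \<cdot> cat_p2 K B X \<cdot> p = cat_id K A"
proof -
  have A: "A \<in> cat_ob K" and B: "B \<in> cat_ob K"
    using f hom_obs by blast+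
  have X: "X \<in> cat_ob K" and p: "p \<in> cat_hom K A (cat_prod K B X)"
    using pure unfolding is_pure_def by blast+
  have graph: "cat_pair K f (cat_id K A) \<in> cat_hom K A (cat_prod K B A)"
    using A B f id_in_hom pair_in_hom by blast
  moreover have "f = runit K B \<cdot> tens K B A (cat_id K B) (discard K A) \<cdot> cat_pair K f (cat_id K A)"
    using marginal_eq_p1[OF graph B A] A B f by (simp add: p1_pair_hom id_in_hom)
  ultimately obtain c where c: "c \<in> cat_hom K X A"
    and graph_eq: "cat_pair K f (cat_id K A) = tens K B X (cat_id K B) c \<cdot> p"
    using pure A unfolding is_pure_def causal_iff_in_hom by blast
  note arrs = in_homD[OF f] in_homD[OF p] in_homD[OF c]
  have "cat_pair K (cat_p1 K B X \<cdot> p) (c \<cdot> cat_p2 K B X \<cdot> p) = cat_pair K f (cat_id K A)"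
    using graph_eq A B X arrs by (simp add: comp_tens cat_simps)
  then have "cat_p1 K B X \<cdot> p = f \<and> c \<cdot> cat_p2 K B X \<cdot> p = cat_id K A"
    by (rule pair_inject) (use A B X arrs in \<open>simp_all add: cat_simps\<close>)
  then show ?thesis
    using that X p c by blast
qed

lemma is_pureI:
  assumes B: "B \<in> cat_ob K" and X: "X \<in> cat_ob K" and p: "p \<in> cat_hom K A (cat_prod K B X)"
    and r: "r \<in> cat_hom K X A" and retraction: "r \<cdot> cat_p2 K B X \<cdot> p = cat_id K A"
  shows "is_pure K A B (cat_p1 K B X \<cdot> p) X p"
  unfolding is_pure_def causal_iff_in_hom
proof (intro conjI ballI impI)
  show "X \<in> cat_ob K" "p \<in> cat_hom K A (cat_prod K B X)"
    using X p .
  fix Y g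
  assume Y: "Y \<in> cat_ob K" and g: "g \<in> cat_hom K A (cat_prod K B Y)"
    and "cat_p1 K B X \<cdot> p = runit K B \<cdot> tens K B Y (cat_id K B) (discard K Y) \<cdot> g"
  then have p1_g: "cat_p1 K B Y \<cdot> g = cat_p1 K B X \<cdot> p"
    using B marginal_eq_p1 by simp
  note arrs = in_homD[OF g] in_homD[OF r] in_homD[OF p]
  let ?c = "cat_p2 K B Y \<cdot> g \<cdot> r"
  show "\<exists>c. c \<in> cat_hom K X Y \<and> g = tens K B X (cat_id K B) c \<cdot> p"
  proof (intro exI conjI)
    show "?c \<in> cat_hom K X Y"
      using B X Y arrs by (intro in_homI) (simp_all add: cat_simps)
    have "tens K B X (cat_id K B) ?c \<cdot> p = cat_pair K (cat_p1 K B X \<cdot> p) (?c \<cdot> cat_p2 K B X \<cdot> p)"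
      using B X Y arrs by (simp add: comp_tens cat_simps)
    also have "\<dots> = cat_pair K (cat_p1 K B Y \<cdot> g) (cat_p2 K B Y \<cdot> g \<cdot> cat_id K A)"
      using B X Y arrs p1_g retraction by (simp add: cat_simps)
    also have "\<dots> = g"
      using B Y arrs by (simp add: cat_simps)
    finally show "g = tens K B X (cat_id K B) ?c \<cdot> p" ..
  qed
qed

lemma
  assumes obs: "A1 \<in> cat_ob K" "B1 \<in> cat_ob K" "C \<in> cat_ob K" "A2 \<in> cat_ob K" "B2 \<in> cat_ob K"
      "X1 \<in> cat_ob K" "X2 \<in> cat_ob K"
    and p1: "p1 \<in> cat_hom K A1 (cat_prod K (cat_prod K B1 C) X1)"
    and p2: "p2 \<in> cat_hom K (cat_prod K C A2) (cat_prod K B2 X2)"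
  shows in_hom_seq_comp_pure: "seq_comp_pure K A1 B1 C A2 B2 X1 X2 p1 p2
      \<in> cat_hom K (cat_prod K A1 A2) (cat_prod K (cat_prod K B1 B2) (cat_prod K X1 X2))"
    and p1_seq_comp_pure: "cat_p1 K (cat_prod K B1 B2) (cat_prod K X1 X2) \<cdot> seq_comp_pure K A1 B1 C A2 B2 X1 X2 p1 p2
      = seq_comp K A1 B1 C A2 (cat_p1 K (cat_prod K B1 C) X1 \<cdot> p1) (cat_p1 K B2 X2 \<cdot> p2)"
    and p2_seq_comp_pure: "cat_p2 K (cat_prod K B1 B2) (cat_prod K X1 X2) \<cdot> seq_comp_pure K A1 B1 C A2 B2 X1 X2 p1 p2
      = cat_pair K (cat_p2 K (cat_prod K B1 C) X1 \<cdot> p1 \<cdot> cat_p1 K A1 A2)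
          (cat_p2 K B2 X2 \<cdot> p2 \<cdot> cat_pair K (cat_p2 K B1 C \<cdot> cat_p1 K (cat_prod K B1 C) X1 \<cdot> p1 \<cdot> cat_p1 K A1 A2)
            (cat_p2 K A1 A2))"
  using obs in_homD[OF p1] in_homD[OF p2]
  unfolding seq_comp_pure_def seq_comp_def Let_def tens_def assoc_def assoc_inv_def symm_def
  by (simp_all add: in_homI cat_simps)

lemma is_pure_graph:
  assumes f: "f \<in> cat_hom K A B"
  shows "is_pure K A B f A (cat_pair K f (cat_id K A))"
proof -
  have A: "A \<in> cat_ob K" and B: "B \<in> cat_ob K"
    using f hom_obs by blast+
  have graph: "cat_pair K f (cat_id K A) \<in> cat_hom K A (cat_prod K B A)"
    using A B f id_in_hom pair_in_hom by blast
  have "cat_id K A \<cdot> cat_p2 K B A \<cdot> cat_pair K f (cat_id K A) = cat_id K A"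
    using A B f id_in_hom by (simp add: p2_pair_hom id_comp_hom[OF id_in_hom[OF A]])
  then have "is_pure K A B (cat_p1 K B A \<cdot> cat_pair K f (cat_id K A)) A (cat_pair K f (cat_id K A))"
    by (rule is_pureI[OF B A graph id_in_hom[OF A]])
  then show ?thesis
    using A B f id_in_hom by (simp add: p1_pair_hom)
qed

lemma retraction_seq_comp_pure:
  assumes obs: "A1 \<in> cat_ob K" "B1 \<in> cat_ob K" "C \<in> cat_ob K" "A2 \<in> cat_ob K" "B2 \<in> cat_ob K"
      "X1 \<in> cat_ob K" "X2 \<in> cat_ob K"
    and p1: "p1 \<in> cat_hom K A1 (cat_prod K (cat_prod K B1 C) X1)"
    and p2: "p2 \<in> cat_hom K (cat_prod K C A2) (cat_prod K B2 X2)"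
    and r1: "r1 \<in> cat_hom K X1 A1" "r1 \<cdot> cat_p2 K (cat_prod K B1 C) X1 \<cdot> p1 = cat_id K A1"
    and r2: "r2 \<in> cat_hom K X2 (cat_prod K C A2)"
      "r2 \<cdot> cat_p2 K B2 X2 \<cdot> p2 = cat_id K (cat_prod K C A2)"
  shows "cat_pair K (r1 \<cdot> cat_p1 K X1 X2) (cat_p2 K C A2 \<cdot> r2 \<cdot> cat_p2 K X1 X2) \<cdot>
      cat_p2 K (cat_prod K B1 B2) (cat_prod K X1 X2) \<cdot> seq_comp_pure K A1 B1 C A2 B2 X1 X2 p1 p2
    = cat_id K (cat_prod K A1 A2)"
proof -
  note arrs = in_homD[OF p1] in_homD[OF p2] in_homD[OF r1(1)] in_homD[OF r2(1)]
  have r1_cancel: "r1 \<cdot> cat_p2 K (cat_prod K B1 C) X1 \<cdot> p1 \<cdot> h = h" if "arr h" "cod h = A1" for h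
    using that obs arrs r1(2) cat_comp_assoc[of h "cat_p2 K (cat_prod K B1 C) X1 \<cdot> p1" r1]
    by (simp add: cat_simps)
  have r2_cancel: "r2 \<cdot> cat_p2 K B2 X2 \<cdot> p2 \<cdot> h = h" if "arr h" "cod h = cat_prod K C A2" for h
    using that obs arrs r2(2) cat_comp_assoc[of h "cat_p2 K B2 X2 \<cdot> p2" r2]
    by (simp add: cat_simps)
  show ?thesis
    using obs arrs p1 p2
    by (simp add: p2_seq_comp_pure r1_cancel r2_cancel cat_simps)
qed

lemma is_pure_seq_comp_pure:
  assumes obs: "A1 \<in> cat_ob K" "B1 \<in> cat_ob K" "C \<in> cat_ob K" "A2 \<in> cat_ob K" "B2 \<in> cat_ob K"
    and f1: "f1 \<in> cat_hom K A1 (cat_prod K B1 C)" and f2: "f2 \<in> cat_hom K (cat_prod K C A2) B2"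
    and pure1: "is_pure K A1 (cat_prod K B1 C) f1 X1 p1"
    and pure2: "is_pure K (cat_prod K C A2) B2 f2 X2 p2"
  shows "is_pure K (cat_prod K A1 A2) (cat_prod K B1 B2) (seq_comp K A1 B1 C A2 f1 f2)
    (cat_prod K X1 X2) (seq_comp_pure K A1 B1 C A2 B2 X1 X2 p1 p2)"
proof -
  obtain r1 where X1: "X1 \<in> cat_ob K" and p1: "p1 \<in> cat_hom K A1 (cat_prod K (cat_prod K B1 C) X1)"
    and f1_eq: "cat_p1 K (cat_prod K B1 C) X1 \<cdot> p1 = f1" and r1: "r1 \<in> cat_hom K X1 A1"
    and r1_retr: "r1 \<cdot> cat_p2 K (cat_prod K B1 C) X1 \<cdot> p1 = cat_id K A1"
    using is_pureD[OF pure1 f1] by blast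
  obtain r2 where X2: "X2 \<in> cat_ob K" and p2: "p2 \<in> cat_hom K (cat_prod K C A2) (cat_prod K B2 X2)"
    and f2_eq: "cat_p1 K B2 X2 \<cdot> p2 = f2" and r2: "r2 \<in> cat_hom K X2 (cat_prod K C A2)"
    and r2_retr: "r2 \<cdot> cat_p2 K B2 X2 \<cdot> p2 = cat_id K (cat_prod K C A2)"
    using is_pureD[OF pure2 f2] by blast
  have "cat_pair K (r1 \<cdot> cat_p1 K X1 X2) (cat_p2 K C A2 \<cdot> r2 \<cdot> cat_p2 K X1 X2)
      \<in> cat_hom K (cat_prod K X1 X2) (cat_prod K A1 A2)"
    using obs X1 X2 in_homD[OF r1] in_homD[OF r2] by (intro in_homI) (simp_all add: cat_simps)
  moreover have "cat_pair K (r1 \<cdot> cat_p1 K X1 X2) (cat_p2 K C A2 \<cdot> r2 \<cdot> cat_p2 K X1 X2) \<cdot>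
      cat_p2 K (cat_prod K B1 B2) (cat_prod K X1 X2) \<cdot> seq_comp_pure K A1 B1 C A2 B2 X1 X2 p1 p2
    = cat_id K (cat_prod K A1 A2)"
    by (rule retraction_seq_comp_pure[OF obs X1 X2 p1 p2 r1 r1_retr r2 r2_retr])
  ultimately have "is_pure K (cat_prod K A1 A2) (cat_prod K B1 B2)
      (cat_p1 K (cat_prod K B1 B2) (cat_prod K X1 X2) \<cdot> seq_comp_pure K A1 B1 C A2 B2 X1 X2 p1 p2)
      (cat_prod K X1 X2) (seq_comp_pure K A1 B1 C A2 B2 X1 X2 p1 p2)"
    by (rule is_pureI[OF prod_ob[OF obs(2,5)] prod_ob[OF X1 X2] in_hom_seq_comp_pure[OF obs X1 X2 p1 p2]])
  then show ?thesis
    by (simp add: p1_seq_comp_pure[OF obs X1 X2 p1 p2] f1_eq f2_eq)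
qed

end

theorem lemma7:
  assumes "cartesian_category K"
  shows "pseudo_purifiable K \<and>
         (\<forall>A\<in>cat_ob K. \<forall>B\<in>cat_ob K. \<forall>f\<in>cat_hom K A B.
            is_pure K A B f A (cat_pair K f (cat_id K A)))"
proof -
  interpret cartesian K
    using assms by (rule cartesian_categoryD)
  show ?thesis
    unfolding pseudo_purifiable_def using is_pure_graph is_pure_seq_comp_pure by blast
qed

end
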